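(* Let $k,n\ge1$, $T:\{0,1\}^k\to\{0,1\}$ a truth table, $(\mathbf z^{[1]},\mathbf z^{[0]},\mathbf z^{[-1]})$ a triple of $n$-bit strings with configuration basis numbers $(n_s)_{s\in\{0,1\}^3}$, and $f:\{0,1\}^3\to\mathbb C$ arbitrary. Then $$\mathbf E_\sigma f\big(\mathbf 1[\mathbf z^{[1]}\vdash\sigma],\mathbf 1[\mathbf z^{[0]}\vdash\sigma],\mathbf 1[\mathbf z^{[-1]}\vdash\sigma]\big)=\sum_{\mathbf y\in\{0,1\}^3}\sum_{\mathbf k\in\mathcal P(k)}f(\mathbf y)\,\frac{1}{2^k}\Big(\prod_{s\in\{0,1\}^3}\Big(\frac{n_s+n_{\bar s}}{n}\Big)^{k_s}\Big)\big|\mathcal Z(\mathbf y,\mathbf k)\big|.$$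
   Context: A clause on $n$ variables is $\sigma=((l_0,\nu_0),\dots,(l_{k-1},\nu_{k-1}))$ with $l_q\in\{0,\dots,n-1\}$, $\nu_q\in\{0,1\}$; $\mathbf x\in\{0,1\}^n$ satisfies $\sigma$ ($\mathbf x\vdash\sigma$) iff $T(x_{l_0}\oplus\nu_0,\dots,x_{l_{k-1}}\oplus\nu_{k-1})=1$. A random clause has all $l_q$ independent uniform in $\{0,\dots,n-1\}$ (repetitions allowed) and all $\nu_q$ independent uniform in $\{0,1\}$; $\mathbf E_\sigma$ is expectation over it. Configuration basis numbers of a triple of $q$-bit strings: $q_s=|\{j:(w^{[1]}_j,w^{[0]}_j,w^{[-1]}_j)=s\}|$, $s\in\{0,1\}^3$; $\bar s$ is the bitwise complement. $\mathcal P(k)$ is the set of families $(k_s)_{s\in\{0,1\}^3}$ of nonnegative integers summing to $k$. $\mathcal Z(\mathbf y,\mathbf k)$ is the set of triples $(\mathbf w^{[1]},\mathbf w^{[0]},\mathbf w^{[-1]})$ of $k$-bit strings with $T(\mathbf w^{[t]})=y^{[t]}$ for all $t\in\{1,0,-1\}$ and configuration basis numbers $\mathbf k$. *)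

theory Defs
  imports "HOL-Probability.Probability"
begin

text \<open>Bits are booleans (False = 0, True = 1); bit strings are bool lists. A truth table T is a function on
  bool lists (only its values on lists of length k matter).\<close>

definition satisfies :: "(bool list \<Rightarrow> bool) \<Rightarrow> bool list \<Rightarrow> (nat \<times> bool) list \<Rightarrow> bool" where
  "satisfies T x \<sigma> = T (map (\<lambda>(l, \<nu>). x ! l \<noteq> \<nu>) \<sigma>)"

text \<open>Clauses on n variables of length k; a random clause is uniform on this set
  (equivalently all l_q, nu_q independent uniform).\<close>
definition clauses :: "nat \<Rightarrow> nat \<Rightarrow> (nat \<times> bool) list set" where
  "clauses n k = {\<sigma>. length \<sigma> = k \<and> (\<forall>p\<in>set \<sigma>. fst p < n)}"

definition E_clause :: "nat \<Rightarrow> nat \<Rightarrow> ((nat \<times> bool) list \<Rightarrow> complex) \<Rightarrow> complex" where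
  "E_clause n k g = measure_pmf.expectation (pmf_of_set (clauses n k)) g"

definition config :: "bool list \<Rightarrow> bool list \<Rightarrow> bool list \<Rightarrow> bool \<times> bool \<times> bool \<Rightarrow> nat" where
  "config w1 w0 wm s = card {j. j < length w1 \<and> (w1 ! j, w0 ! j, wm ! j) = s}"

definition compl3 :: "bool \<times> bool \<times> bool \<Rightarrow> bool \<times> bool \<times> bool" where
  "compl3 s = (\<not> fst s, \<not> fst (snd s), \<not> snd (snd s))"

definition Pk :: "nat \<Rightarrow> (bool \<times> bool \<times> bool \<Rightarrow> nat) set" where
  "Pk k = {kv. (\<Sum>s\<in>UNIV. kv s) = k}"

definition Zset :: "(bool list \<Rightarrow> bool) \<Rightarrow> nat \<Rightarrow> bool \<times> bool \<times> bool \<Rightarrow> (bool \<times> bool \<times> bool \<Rightarrow> nat)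
    \<Rightarrow> (bool list \<times> bool list \<times> bool list) set" where
  "Zset T k y kv = {(w1, w0, wm). length w1 = k \<and> length w0 = k \<and> length wm = k \<and>
      T w1 = fst y \<and> T w0 = fst (snd y) \<and> T wm = snd (snd y) \<and> config w1 w0 wm = kv}"

end

theory Submission imports Defs begin

text \<open>A uniform clause is a uniform list of k literals (l, nu), and only the triple
  (z1 ! l \<noteq> nu, z0 ! l \<noteq> nu, zm ! l \<noteq> nu) that a literal sees matters. Exactly
  n_s + n_(bar s) of the 2n literals see the triple s, so a list c of k triples is seen by
  \<Prod>_s (n_s + n_(bar s))^(count c s) clauses. Read column-wise, c is a triple of k-bit strings
  whose configuration basis numbers are the counts count c s; grouping these triples of strings
  by their T-values y and configuration numbers k gives the sets Z(y, k).\<close>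

lemma expectation_pmf_of_set:
  fixes g :: "'a \<Rightarrow> 'b::{banach, real_normed_field, second_countable_topology}"
  assumes "finite S" "S \<noteq> {}"
  shows "measure_pmf.expectation (pmf_of_set S) g = (\<Sum>a\<in>S. g a) / of_nat (card S)"
proof -
  have "measure_pmf.expectation (pmf_of_set S) g = (\<Sum>a\<in>S. pmf (pmf_of_set S) a *\<^sub>R g a)"
    by (rule integral_measure_pmf[OF assms(1)]) (use assms in auto)
  also have "\<dots> = (\<Sum>a\<in>S. g a / of_nat (card S))"
    using assms by (intro sum.cong) (auto simp: scaleR_conv_of_real divide_simps)
  finally show ?thesis by (simp add: sum_divide_distrib)
qed

lemma sum_lists_length_map:
  fixes G :: "'b::finite list \<Rightarrow> 'c::comm_semiring_1" and \<psi> :: "'a \<Rightarrow> 'b"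
  assumes "finite A"
  shows "(\<Sum>\<sigma> | set \<sigma> \<subseteq> A \<and> length \<sigma> = k. G (map \<psi> \<sigma>)) =
    (\<Sum>c | length c = k. G c * (\<Prod>s\<in>UNIV. of_nat (card {a\<in>A. \<psi> a = s}) ^ count_list c s))"
proof (induction k arbitrary: G)
  case 0
  have "{xs. set xs \<subseteq> A \<and> length xs = 0} = {[]}" "{xs :: 'b list. length xs = 0} = {[]}"
    by auto
  then show ?case by (simp only:) simp
next
  case (Suc k)
  let ?L = "\<lambda>B. {xs. set xs \<subseteq> B \<and> length xs = k}"
  let ?h = "\<lambda>s. (of_nat (card {a\<in>A. \<psi> a = s}) :: 'c)"
  let ?P = "\<lambda>c. \<Prod>s\<in>UNIV. ?h s ^ count_list c s"
  have cons_inj: "inj_on (\<lambda>(xs, x). x # xs) X" for X :: "('d list \<times> 'd) set"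
    by (auto simp: inj_on_def)
  have lists_Suc: "{xs. set xs \<subseteq> B \<and> length xs = Suc k} = (\<lambda>(xs, x). x # xs) ` (?L B \<times> B)"
    for B :: "'d set"
    by (simp add: lists_length_Suc_eq)
  have lists_Suc_UNIV: "{xs. length xs = Suc k} = (\<lambda>(xs, x). x # xs) ` ({xs. length xs = k} \<times> UNIV)"
    using lists_Suc[of UNIV] by simp
  have P_Cons: "?P (b # c) = ?h b * ?P c" for b c
  proof -
    have "?P (b # c) = (\<Prod>s\<in>UNIV. (if b = s then ?h s else 1) * ?h s ^ count_list c s)"
      by (intro prod.cong) auto
    also have "\<dots> = ?h b * ?P c" by (simp add: prod.distrib)
    finally show ?thesis .
  qed
  have "(\<Sum>\<sigma> | set \<sigma> \<subseteq> A \<and> length \<sigma> = Suc k. G (map \<psi> \<sigma>))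
      = (\<Sum>xs\<in>?L A. \<Sum>x\<in>A. G (\<psi> x # map \<psi> xs))"
    unfolding lists_Suc sum.reindex[OF cons_inj] sum.cartesian_product' by simp
  also have "\<dots> = (\<Sum>x\<in>A. \<Sum>xs\<in>?L A. G (\<psi> x # map \<psi> xs))"
    by (rule sum.swap)
  also have "\<dots> = (\<Sum>x\<in>A. \<Sum>c | length c = k. G (\<psi> x # c) * ?P c)"
    by (intro sum.cong refl) (rule Suc.IH)
  also have "\<dots> = (\<Sum>b\<in>UNIV. \<Sum>x\<in>{x\<in>A. \<psi> x = b}. \<Sum>c | length c = k. G (\<psi> x # c) * ?P c)"
    by (rule sum.group[symmetric]) (use assms in auto)
  also have "\<dots> = (\<Sum>b\<in>UNIV. \<Sum>c | length c = k. G (b # c) * (?h b * ?P c))"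
    by (intro sum.cong refl) (simp add: sum_distrib_left mult_ac)
  also have "\<dots> = (\<Sum>b\<in>UNIV. \<Sum>c | length c = k. G (b # c) * ?P (b # c))"
    by (simp only: P_Cons)
  also have "\<dots> = (\<Sum>c | length c = k. \<Sum>b\<in>UNIV. G (b # c) * ?P (b # c))"
    by (rule sum.swap)
  also have "\<dots> = (\<Sum>c | length c = Suc k. G c * ?P c)"
    unfolding lists_Suc_UNIV sum.reindex[OF cons_inj] sum.cartesian_product' by simp
  finally show ?case .
qed

lemma clauses_eq_lists: "clauses n k = {\<sigma>. set \<sigma> \<subseteq> {..<n} \<times> UNIV \<and> length \<sigma> = k}"
  by (auto simp: clauses_def)

lemma card_clauses: "card (clauses n k) = (2 * n) ^ k"
  by (simp add: clauses_eq_lists card_lists_length_eq mult.commute)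

lemma E_clause_eq_average:
  assumes "n \<ge> 1"
  shows "E_clause n k g = (\<Sum>\<sigma>\<in>clauses n k. g \<sigma>) / of_nat ((2 * n) ^ k)"
proof -
  have "replicate k (0, False) \<in> clauses n k" using assms by (auto simp: clauses_def)
  then have "clauses n k \<noteq> {}" by auto
  then show ?thesis
    unfolding E_clause_def card_clauses[symmetric]
    by (intro expectation_pmf_of_set) (simp_all add: clauses_eq_lists finite_lists_length_eq)
qed

definition literal_triple :: "bool list \<Rightarrow> bool list \<Rightarrow> bool list \<Rightarrow> nat \<times> bool \<Rightarrow> bool \<times> bool \<times> bool"
  where "literal_triple z1 z0 zm = (\<lambda>(l, \<nu>). (z1 ! l \<noteq> \<nu>, z0 ! l \<noteq> \<nu>, zm ! l \<noteq> \<nu>))"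

definition unzip3 :: "('a \<times> 'b \<times> 'c) list \<Rightarrow> 'a list \<times> 'b list \<times> 'c list"
  where "unzip3 c = (map fst c, map (fst \<circ> snd) c, map (snd \<circ> snd) c)"

lemma satisfies_triple_eq:
  "(satisfies T z1 \<sigma>, satisfies T z0 \<sigma>, satisfies T zm \<sigma>) =
    map_prod T (map_prod T T) (unzip3 (map (literal_triple z1 z0 zm) \<sigma>))"
  by (simp add: satisfies_def unzip3_def literal_triple_def case_prod_unfold comp_def)

lemma card_literal_triple_fibre:
  assumes "length z1 = n" "length z0 = n" "length zm = n"
  shows "card {a \<in> {..<n} \<times> UNIV. literal_triple z1 z0 zm a = s} =
    config z1 z0 zm s + config z1 z0 zm (compl3 s)"
proof -
  define col where "col l = (z1 ! l, z0 ! l, zm ! l)" for l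
  have "{a \<in> {..<n} \<times> UNIV. literal_triple z1 z0 zm a = s} =
      (\<lambda>l. (l, False)) ` {l. l < n \<and> col l = s} \<union> (\<lambda>l. (l, True)) ` {l. l < n \<and> col l = compl3 s}"
    by (cases s) (auto simp: literal_triple_def col_def compl3_def)
  also have "card \<dots> = card ((\<lambda>l. (l, False)) ` {l. l < n \<and> col l = s})
      + card ((\<lambda>l. (l, True)) ` {l. l < n \<and> col l = compl3 s})"
    by (rule card_Un_disjoint) auto
  also have "\<dots> = card {l. l < n \<and> col l = s} + card {l. l < n \<and> col l = compl3 s}"
    by (simp add: card_image inj_on_def)
  finally show ?thesis
    using assms by (simp add: config_def col_def)
qed

lemma inj_unzip3: "inj unzip3"
  by (rule inj_on_inverseI[where g = "\<lambda>(w1, w0, wm). zip w1 (zip w0 wm)"])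
     (simp add: unzip3_def list_eq_iff_nth_eq)

lemma config_unzip3:
  assumes "unzip3 c = (w1, w0, wm)"
  shows "config w1 w0 wm = count_list c"
proof
  fix s
  have w: "w1 = map fst c" "w0 = map (fst \<circ> snd) c" "wm = map (snd \<circ> snd) c"
    using assms by (simp_all add: unzip3_def)
  have "{j. j < length w1 \<and> (w1 ! j, w0 ! j, wm ! j) = s} = {j. j < length c \<and> s = c ! j}"
    by (auto simp: w)
  then show "config w1 w0 wm s = count_list c s"
    by (simp add: config_def count_list_eq_length_filter length_filter_conv_card)
qed

lemma Zset_eq_image_unzip3:
  "Zset T k y kv = unzip3 `
     {c. length c = k \<and> map_prod T (map_prod T T) (unzip3 c) = y \<and> count_list c = kv}"
  (is "_ = unzip3 ` ?C")
proof (intro equalityI subsetI)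
  fix w assume "w \<in> Zset T k y kv"
  then obtain w1 w0 wm where w_eq: "w = (w1, w0, wm)"
    and len: "length w1 = k" "length w0 = k" "length wm = k"
    and T_w: "map_prod T (map_prod T T) w = y" and config_w: "config w1 w0 wm = kv"
    by (cases w; cases y) (auto simp: Zset_def)
  define c where "c = zip w1 (zip w0 wm)"
  have unzip_c: "unzip3 c = w"
    using len by (simp add: w_eq c_def unzip3_def list_eq_iff_nth_eq)
  have "length c = k"
    using len by (simp add: c_def)
  moreover have "map_prod T (map_prod T T) (unzip3 c) = y"
    using T_w by (simp add: unzip_c)
  moreover have "count_list c = kv"
    using config_w config_unzip3[OF unzip_c[unfolded w_eq]] by simp
  ultimately show "w \<in> unzip3 ` ?C"
    using unzip_c by blast
next
  fix w assume "w \<in> unzip3 ` ?C"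
  then obtain c where c: "length c = k" "map_prod T (map_prod T T) (unzip3 c) = y" "count_list c = kv"
    and w: "w = unzip3 c"
    by blast
  obtain w1 w0 wm where unzip_c: "unzip3 c = (w1, w0, wm)" by (cases "unzip3 c")
  show "w \<in> Zset T k y kv"
    using c config_unzip3[OF unzip_c] unzip_c by (cases y) (auto simp: w Zset_def unzip3_def)
qed

lemma count_list_in_Pk: "length c = k \<Longrightarrow> count_list c \<in> Pk k"
  by (simp add: Pk_def sum_count_set)

lemma finite_Pk: "finite (Pk k)"
proof (rule finite_subset)
  show "Pk k \<subseteq> {kv :: bool \<times> bool \<times> bool \<Rightarrow> nat. \<forall>s. (s \<in> UNIV \<longrightarrow> kv s \<in> {..k}) \<and> (s \<notin> UNIV \<longrightarrow> kv s = 0)}"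
  proof (intro subsetI CollectI allI conjI impI)
    fix kv s assume "kv \<in> Pk k"
    then show "kv s \<in> {..k}"
      using member_le_sum[of s UNIV kv] by (simp add: Pk_def)
  qed simp
  show "finite {kv :: bool \<times> bool \<times> bool \<Rightarrow> nat. \<forall>s. (s \<in> UNIV \<longrightarrow> kv s \<in> {..k}) \<and> (s \<notin> UNIV \<longrightarrow> kv s = 0)}"
    by (rule finite_set_of_finite_funs) auto
qed

lemma prod_power_divide_Pk:
  fixes x :: "bool \<times> bool \<times> bool \<Rightarrow> 'a::field"
  assumes "kv \<in> Pk k"
  shows "(\<Prod>s\<in>UNIV. (x s / c) ^ kv s) = (\<Prod>s\<in>UNIV. x s ^ kv s) / c ^ k"
proof -
  have "(\<Prod>s\<in>UNIV. (x s / c) ^ kv s) = (\<Prod>s\<in>UNIV. x s ^ kv s) / (\<Prod>s\<in>UNIV. c ^ kv s)"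
    by (simp only: power_divide prod_dividef)
  also have "(\<Prod>s\<in>UNIV. c ^ kv s) = c ^ k"
    using assms by (simp add: Pk_def flip: power_sum)
  finally show ?thesis .
qed

lemma sum_triple_lists_by_Zset:
  fixes g :: "bool \<times> bool \<times> bool \<Rightarrow> (bool \<times> bool \<times> bool \<Rightarrow> nat) \<Rightarrow> 'a::comm_semiring_1"
  shows "(\<Sum>c | length c = k. g (map_prod T (map_prod T T) (unzip3 c)) (count_list c)) =
    (\<Sum>y\<in>UNIV. \<Sum>kv\<in>Pk k. of_nat (card (Zset T k y kv)) * g y kv)"
proof -
  let ?key = "\<lambda>c. (map_prod T (map_prod T T) (unzip3 c), count_list c)"
  let ?L = "{c :: (bool \<times> bool \<times> bool) list. length c = k}"
  have "(\<Sum>c\<in>?L. g (fst (?key c)) (snd (?key c))) =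
      (\<Sum>p\<in>UNIV \<times> Pk k. \<Sum>c\<in>{c\<in>?L. ?key c = p}. g (fst (?key c)) (snd (?key c)))"
    by (rule sum.group[symmetric])
       (auto simp: finite_lists_length_eq[of UNIV, simplified] finite_Pk count_list_in_Pk)
  also have "\<dots> = (\<Sum>(y, kv)\<in>UNIV \<times> Pk k. of_nat (card (Zset T k y kv)) * g y kv)"
  proof (intro sum.cong refl, clarify)
    fix y kv
    have fibre: "{c\<in>?L. ?key c = (y, kv)} =
        {c. length c = k \<and> map_prod T (map_prod T T) (unzip3 c) = y \<and> count_list c = kv}"
      by auto
    have "card (Zset T k y kv) = card {c\<in>?L. ?key c = (y, kv)}"
      unfolding fibre Zset_eq_image_unzip3 by (rule card_image[OF inj_on_subset[OF inj_unzip3]]) simp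
    then show "(\<Sum>c\<in>{c\<in>?L. ?key c = (y, kv)}. g (fst (?key c)) (snd (?key c))) =
        of_nat (card (Zset T k y kv)) * g y kv"
      by simp
  qed
  finally show ?thesis
    by (simp add: sum.cartesian_product)
qed

lemma sum_clauses_by_Zset:
  fixes f :: "bool \<times> bool \<times> bool \<Rightarrow> 'a::comm_semiring_1"
  assumes "length z1 = n" "length z0 = n" "length zm = n"
  shows "(\<Sum>\<sigma>\<in>clauses n k. f (satisfies T z1 \<sigma>, satisfies T z0 \<sigma>, satisfies T zm \<sigma>)) =
    (\<Sum>y\<in>UNIV. \<Sum>kv\<in>Pk k. of_nat (card (Zset T k y kv)) *
       (f y * (\<Prod>s\<in>UNIV. of_nat (config z1 z0 zm s + config z1 z0 zm (compl3 s)) ^ kv s)))"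
proof -
  let ?h = "\<lambda>s. of_nat (config z1 z0 zm s + config z1 z0 zm (compl3 s)) :: 'a"
  have "(\<Sum>\<sigma>\<in>clauses n k. f (satisfies T z1 \<sigma>, satisfies T z0 \<sigma>, satisfies T zm \<sigma>)) =
      (\<Sum>c | length c = k. f (map_prod T (map_prod T T) (unzip3 c)) * (\<Prod>s\<in>UNIV. ?h s ^ count_list c s))"
    using sum_lists_length_map[where A = "{..<n} \<times> UNIV" and \<psi> = "literal_triple z1 z0 zm"
        and G = "\<lambda>c. f (map_prod T (map_prod T T) (unzip3 c))"]
    by (simp add: clauses_eq_lists satisfies_triple_eq card_literal_triple_fibre[OF assms])
  also have "\<dots> = (\<Sum>y\<in>UNIV. \<Sum>kv\<in>Pk k. of_nat (card (Zset T k y kv)) * (f y * (\<Prod>s\<in>UNIV. ?h s ^ kv s)))"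
    by (rule sum_triple_lists_by_Zset[where g = "\<lambda>y kv. f y * (\<Prod>s\<in>UNIV. ?h s ^ kv s)"])
  finally show ?thesis .
qed

theorem mainTheorem9:
  fixes T :: "bool list \<Rightarrow> bool" and z1 z0 zm :: "bool list"
    and f :: "bool \<times> bool \<times> bool \<Rightarrow> complex" and k n :: nat
  assumes "k \<ge> 1" and "n \<ge> 1"
    and "length z1 = n" and "length z0 = n" and "length zm = n"
  shows "E_clause n k (\<lambda>\<sigma>. f (satisfies T z1 \<sigma>, satisfies T z0 \<sigma>, satisfies T zm \<sigma>)) =
    (\<Sum>y\<in>UNIV. \<Sum>kv\<in>Pk k. f y * (1 / 2 ^ k) *
       (\<Prod>s\<in>UNIV. (of_nat (config z1 z0 zm s + config z1 z0 zm (compl3 s)) / of_nat n) ^ kv s) *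
       of_nat (card (Zset T k y kv)))"
proof -
  let ?h = "\<lambda>s. of_nat (config z1 z0 zm s + config z1 z0 zm (compl3 s)) :: complex"
  have "E_clause n k (\<lambda>\<sigma>. f (satisfies T z1 \<sigma>, satisfies T z0 \<sigma>, satisfies T zm \<sigma>)) =
      (\<Sum>y\<in>UNIV. \<Sum>kv\<in>Pk k. of_nat (card (Zset T k y kv)) * (f y * (\<Prod>s\<in>UNIV. ?h s ^ kv s)))
        / of_nat ((2 * n) ^ k)"
    by (simp only: E_clause_eq_average[OF assms(2)] sum_clauses_by_Zset[OF assms(3-5)])
  also have "\<dots> = (\<Sum>y\<in>UNIV. \<Sum>kv\<in>Pk k. f y * (1 / 2 ^ k) *
      (\<Prod>s\<in>UNIV. (?h s / of_nat n) ^ kv s) * of_nat (card (Zset T k y kv)))"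
    unfolding sum_divide_distrib
  proof (intro sum.cong refl)
    fix y kv assume "kv \<in> Pk k"
    show "of_nat (card (Zset T k y kv)) * (f y * (\<Prod>s\<in>UNIV. ?h s ^ kv s)) / of_nat ((2 * n) ^ k) =
        f y * (1 / 2 ^ k) * (\<Prod>s\<in>UNIV. (?h s / of_nat n) ^ kv s) * of_nat (card (Zset T k y kv))"
      unfolding prod_power_divide_Pk[OF \<open>kv \<in> Pk k\<close>] by (simp add: field_simps)
  qed
  finally show ?thesis .
qed

end
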